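(* For every instance of problem MR and every optimal schedule, the speed $s_{i,j}$ of every task $T_{i,j}$ with $v_{i,j}>0$ satisfies $$\frac{v_{i,j}}{t_{\max}}\le s_{i,j}\le\left(\frac{E}{v_{i,j}}\right)^{\frac{1}{\beta-1}},\qquad t_{\max}=\frac{w_{\max}}{w_{\min}}\left(n\,r_{\max}+n(n+1)\left(\frac{|\mathcal T|\cdot v_{\max}^{\beta}}{E}\right)^{\frac{1}{\beta-1}}\right).$$
   Context: Problem MR. There are jobs $\mathcal J=\{1,\dots,n\}$ and processors $\mathcal P=\{1,\dots,m\}$. Job $j$ has weight $w_j>0$, release date $r_j\ge0$, and a nonempty set of Map tasks and a nonempty set of Reduce tasks, preassigned to processors with at most one task of each job per processor; $T_{i,j}$ is the task of job $j$ on processor $i$, with work $v_{i,j}\ge0$; $\mathcal T$ is the set of all tasks and $|\mathcal T|$ its cardinality. A schedule gives each task a start time and a constant speed $s_{i,j}>0$; the task runs non-preemptively for $v_{i,j}/s_{i,j}$ time units and uses energy $v_{i,j}s_{i,j}^{\beta-1}$, where $\beta>1$ is a fixed constant. Feasibility: each processor runs at most one task at a time; tasks of job $j$ start no earlier than $r_j$; Reduce tasks of job $j$ start only after all Map tasks of job $j$ complete; total energy at most a given budget $E>0$. $C_j$ is the maximum completion time of the tasks of job $j$; the objective is to minimize $\sum_j w_jC_j$. $w_{\min}=\min_j w_j$, $w_{\max}=\max_j w_j$, $r_{\max}=\max_j r_j$, $v_{\max}=\max_{i,j}v_{i,j}$. *)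

theory Defs
  imports Complex_Main
begin

text \<open>A task is identified by a pair (i,j) = (processor, job); MT is the set of Map tasks,
  RT the set of Reduce tasks. w, r are job weights and release dates, v the works,
  beta the energy exponent, E the energy budget.\<close>

definition mr_instance ::
  "nat \<Rightarrow> nat \<Rightarrow> (nat \<Rightarrow> real) \<Rightarrow> (nat \<Rightarrow> real) \<Rightarrow> (nat \<times> nat) set \<Rightarrow> (nat \<times> nat) set
   \<Rightarrow> (nat \<Rightarrow> nat \<Rightarrow> real) \<Rightarrow> real \<Rightarrow> real \<Rightarrow> bool" where
  "mr_instance n m w r MT RT v \<beta> E \<longleftrightarrow>
     MT \<subseteq> {1..m} \<times> {1..n} \<and> RT \<subseteq> {1..m} \<times> {1..n} \<and> MT \<inter> RT = {} \<and>
     (\<forall>j\<in>{1..n}. w j > 0 \<and> r j \<ge> 0 \<and>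
        (\<exists>i. (i, j) \<in> MT) \<and> (\<exists>i. (i, j) \<in> RT)) \<and>
     (\<forall>(i, j)\<in>MT \<union> RT. v i j \<ge> 0) \<and> \<beta> > 1 \<and> E > 0"

definition compl :: "(nat \<Rightarrow> nat \<Rightarrow> real) \<Rightarrow> (nat \<Rightarrow> nat \<Rightarrow> real) \<Rightarrow> (nat \<Rightarrow> nat \<Rightarrow> real)
   \<Rightarrow> nat \<Rightarrow> nat \<Rightarrow> real" where
  "compl v st s i j = st i j + v i j / s i j"

definition energy :: "real \<Rightarrow> (nat \<times> nat) set \<Rightarrow> (nat \<Rightarrow> nat \<Rightarrow> real) \<Rightarrow> (nat \<Rightarrow> nat \<Rightarrow> real) \<Rightarrow> real" where
  "energy \<beta> T v s = (\<Sum>(i, j)\<in>T. v i j * s i j powr (\<beta> - 1))"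

definition feasible ::
  "nat \<Rightarrow> nat \<Rightarrow> (nat \<Rightarrow> real) \<Rightarrow> (nat \<times> nat) set \<Rightarrow> (nat \<times> nat) set
   \<Rightarrow> (nat \<Rightarrow> nat \<Rightarrow> real) \<Rightarrow> real \<Rightarrow> real
   \<Rightarrow> (nat \<Rightarrow> nat \<Rightarrow> real) \<Rightarrow> (nat \<Rightarrow> nat \<Rightarrow> real) \<Rightarrow> bool" where
  "feasible n m r MT RT v \<beta> E st s \<longleftrightarrow>
     (\<forall>(i, j)\<in>MT \<union> RT. s i j > 0) \<and>
     (\<forall>(i, j)\<in>MT \<union> RT. st i j \<ge> r j) \<and>
     (\<forall>(i, j)\<in>MT \<union> RT. \<forall>(i', j')\<in>MT \<union> RT. i = i' \<and> j \<noteq> j' \<longrightarrow>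
         compl v st s i j \<le> st i' j' \<or> compl v st s i' j' \<le> st i j) \<and>
     (\<forall>(i, j)\<in>RT. \<forall>(i', j')\<in>MT. j' = j \<longrightarrow> compl v st s i' j' \<le> st i j) \<and>
     energy \<beta> (MT \<union> RT) v s \<le> E"

definition job_completion ::
  "(nat \<times> nat) set \<Rightarrow> (nat \<times> nat) set \<Rightarrow> (nat \<Rightarrow> nat \<Rightarrow> real)
   \<Rightarrow> (nat \<Rightarrow> nat \<Rightarrow> real) \<Rightarrow> (nat \<Rightarrow> nat \<Rightarrow> real) \<Rightarrow> nat \<Rightarrow> real" where
  "job_completion MT RT v st s j =
     Max ((\<lambda>(i, j'). compl v st s i j') ` {t \<in> MT \<union> RT. snd t = j})"

definition objective ::
  "nat \<Rightarrow> (nat \<Rightarrow> real) \<Rightarrow> (nat \<times> nat) set \<Rightarrow> (nat \<times> nat) set \<Rightarrow> (nat \<Rightarrow> nat \<Rightarrow> real)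
   \<Rightarrow> (nat \<Rightarrow> nat \<Rightarrow> real) \<Rightarrow> (nat \<Rightarrow> nat \<Rightarrow> real) \<Rightarrow> real" where
  "objective n w MT RT v st s = (\<Sum>j\<in>{1..n}. w j * job_completion MT RT v st s j)"

definition optimal ::
  "nat \<Rightarrow> nat \<Rightarrow> (nat \<Rightarrow> real) \<Rightarrow> (nat \<Rightarrow> real) \<Rightarrow> (nat \<times> nat) set \<Rightarrow> (nat \<times> nat) set
   \<Rightarrow> (nat \<Rightarrow> nat \<Rightarrow> real) \<Rightarrow> real \<Rightarrow> real
   \<Rightarrow> (nat \<Rightarrow> nat \<Rightarrow> real) \<Rightarrow> (nat \<Rightarrow> nat \<Rightarrow> real) \<Rightarrow> bool" where
  "optimal n m w r MT RT v \<beta> E st s \<longleftrightarrow>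
     feasible n m r MT RT v \<beta> E st s \<and>
     (\<forall>st' s'. feasible n m r MT RT v \<beta> E st' s' \<longrightarrow>
        objective n w MT RT v st s \<le> objective n w MT RT v st' s')"

definition t_max ::
  "nat \<Rightarrow> (nat \<Rightarrow> real) \<Rightarrow> (nat \<Rightarrow> real) \<Rightarrow> (nat \<times> nat) set \<Rightarrow> (nat \<times> nat) set
   \<Rightarrow> (nat \<Rightarrow> nat \<Rightarrow> real) \<Rightarrow> real \<Rightarrow> real \<Rightarrow> real" where
  "t_max n w r MT RT v \<beta> E =
     (let wmin = Min (w ` {1..n}); wmax = Max (w ` {1..n}); rmax = Max (r ` {1..n});
          T = MT \<union> RT; vmax = Max ((\<lambda>(i, j). v i j) ` T)
      in wmax / wmin * (real n * rmax + real n * (real n + 1) *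
           (real (card T) * vmax powr \<beta> / E) powr (1 / (\<beta> - 1))))"

end

theory Submission
  imports Defs
begin

text \<open>The upper bound holds because a single task already spends at least v s^(\<beta>-1) of
  the budget. For the lower bound, compare with the schedule that runs every task at one
  common speed chosen to use up exactly the budget, placing the Map tasks of job k in time
  slot 2k - 1 and its Reduce tasks in slot 2k after the last release date; this schedule has
  objective at most w_min t_max. In an optimal schedule job j completes no earlier than
  v_ij / s_ij, so w_min v_ij / s_ij is at most the optimal objective, hence at most
  w_min t_max.\<close>

lemma sum_of_doubles_atLeastAtMost: "(\<Sum>k\<in>{1..n}. 2 * real k) = real n * (real n + 1)"
  by (induction n) (auto simp: algebra_simps)

lemma speed_le_energy_root:
  assumes "finite T" "(i, j) \<in> T" "\<forall>(a, b)\<in>T. v a b \<ge> 0"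
    and "v i j > 0" "s i j > 0" "\<beta> > 1" "energy \<beta> T v s \<le> E"
  shows "s i j \<le> (E / v i j) powr (1 / (\<beta> - 1))"
proof -
  have "v i j * s i j powr (\<beta> - 1) \<le> energy \<beta> T v s"
    unfolding energy_def
    using member_le_sum[of "(i, j)" T "\<lambda>(a, b). v a b * s a b powr (\<beta> - 1)"] assms(1-3)
    by (auto simp: split_beta)
  then have "s i j powr (\<beta> - 1) \<le> E / v i j"
    using assms(4,7) by (simp add: field_simps)
  then have "(s i j powr (\<beta> - 1)) powr (1 / (\<beta> - 1)) \<le> (E / v i j) powr (1 / (\<beta> - 1))"
    using assms(6) by (intro powr_mono2) auto
  then show ?thesis
    using assms(5,6) by (simp add: powr_powr)
qed

lemma constant_speed_energy_le:
  assumes "\<forall>(a, b)\<in>T. v a b \<le> V"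
  shows "energy \<beta> T v (\<lambda>_ _. \<sigma>) \<le> real (card T) * V * \<sigma> powr (\<beta> - 1)"
proof -
  have "energy \<beta> T v (\<lambda>_ _. \<sigma>) \<le> (\<Sum>(a, b)\<in>T. V * \<sigma> powr (\<beta> - 1))"
    unfolding energy_def using assms by (intro sum_mono) (auto intro!: mult_right_mono)
  then show ?thesis by simp
qed

lemma budget_speed_energy_eq:
  fixes c V E \<beta> X :: real
  assumes "c > 0" "V > 0" "E > 0" "\<beta> > 1"
    and "X = (c * V powr \<beta> / E) powr (1 / (\<beta> - 1))"
  shows "c * V * (V / X) powr (\<beta> - 1) = E"
proof -
  have "c * V powr \<beta> / E > 0" using assms(1-3) by simp
  then have "X > 0" using assms(5) by auto
  have "X powr (\<beta> - 1) = c * V powr \<beta> / E"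
    using assms by (simp add: powr_powr)
  moreover have "V powr (\<beta> - 1) = V powr \<beta> / V"
    using assms(2) by (simp add: powr_diff)
  ultimately have "(V / X) powr (\<beta> - 1) = E / (c * V)"
    using assms(1-3) \<open>X > 0\<close> by (simp add: powr_divide field_simps)
  then show ?thesis using assms(1,2) by simp
qed

lemma compl_le_job_completion:
  assumes "finite (MT \<union> RT)" "(a, k) \<in> MT \<union> RT"
  shows "compl v st s a k \<le> job_completion MT RT v st s k"
  unfolding job_completion_def using assms by (intro Max_ge) force+

lemma job_completion_le:
  assumes "finite (MT \<union> RT)" "(a, k) \<in> MT \<union> RT"
    and "\<And>a. (a, k) \<in> MT \<union> RT \<Longrightarrow> compl v st s a k \<le> B"
  shows "job_completion MT RT v st s k \<le> B"
proof -
  have "{t \<in> MT \<union> RT. snd t = k} \<noteq> {}" using assms(2) by force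
  then show ?thesis
    unfolding job_completion_def using assms(1,3) by (subst Max_le_iff) auto
qed

definition slot_start :: "(nat \<times> nat) set \<Rightarrow> real \<Rightarrow> real \<Rightarrow> nat \<Rightarrow> nat \<Rightarrow> real" where
  "slot_start MT R X a b = R + X * (if (a, b) \<in> MT then 2 * real b - 2 else 2 * real b - 1)"

lemma slot_start_ge:
  assumes "X \<ge> 0"
  shows "R + X * (2 * real b - 2) \<le> slot_start MT R X a b"
  using assms unfolding slot_start_def by (auto intro: mult_left_mono)

lemma slot_compl_le:
  assumes "v a b / \<sigma> \<le> X"
  shows "compl v (slot_start MT R X) (\<lambda>_ _. \<sigma>) a b \<le> slot_start MT R X a b + X"
  using assms unfolding compl_def by simp

lemma slot_compl_le_job_end:
  assumes "X \<ge> 0" "v a b / \<sigma> \<le> X"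
  shows "compl v (slot_start MT R X) (\<lambda>_ _. \<sigma>) a b \<le> R + X * (2 * real b)"
proof -
  have "slot_start MT R X a b \<le> R + X * (2 * real b - 1)"
    using assms(1) unfolding slot_start_def by (auto intro: mult_left_mono)
  then show ?thesis
    using slot_compl_le[of v a b \<sigma> X MT R] assms(2) by (simp add: algebra_simps)
qed

context
  fixes n m :: nat and w r :: "nat \<Rightarrow> real" and MT RT :: "(nat \<times> nat) set"
    and v :: "nat \<Rightarrow> nat \<Rightarrow> real" and \<beta> E :: real
  assumes inst: "mr_instance n m w r MT RT v \<beta> E"
begin

lemma task_job_in_range: "(a, b) \<in> MT \<union> RT \<Longrightarrow> b \<in> {1..n}"
  using inst unfolding mr_instance_def by auto

lemma finite_tasks: "finite (MT \<union> RT)"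
proof -
  have "MT \<union> RT \<subseteq> {1..m} \<times> {1..n}" using inst unfolding mr_instance_def by auto
  then show ?thesis by (rule finite_subset) simp
qed

lemma job_has_map_task: "k \<in> {1..n} \<Longrightarrow> \<exists>a. (a, k) \<in> MT"
  using inst unfolding mr_instance_def by auto

lemma weight_pos: "k \<in> {1..n} \<Longrightarrow> w k > 0"
  using inst unfolding mr_instance_def by auto

lemma release_nonneg: "k \<in> {1..n} \<Longrightarrow> r k \<ge> 0"
  using inst unfolding mr_instance_def by auto

lemma work_nonneg: "\<forall>(a, b)\<in>MT \<union> RT. v a b \<ge> 0"
  using inst unfolding mr_instance_def by auto

lemma beta_gt_1: "\<beta> > 1" and budget_pos: "E > 0"
  using inst unfolding mr_instance_def by auto

lemma slot_schedule_feasible: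
  assumes "\<forall>b\<in>{1..n}. r b \<le> R" "X \<ge> 0" "\<sigma> > 0"
    and "\<forall>(a, b)\<in>MT \<union> RT. v a b / \<sigma> \<le> X"
    and "energy \<beta> (MT \<union> RT) v (\<lambda>_ _. \<sigma>) \<le> E"
  shows "feasible n m r MT RT v \<beta> E (slot_start MT R X) (\<lambda>_ _. \<sigma>)"
proof -
  let ?st = "slot_start MT R X" and ?s = "\<lambda>_ _. \<sigma>"
  have compl_le: "compl v ?st ?s a b \<le> R + X * (2 * real b)" if "(a, b) \<in> MT \<union> RT" for a b
    using assms(4) that by (intro slot_compl_le_job_end[OF \<open>X \<ge> 0\<close>]) auto
  have earlier_job_first: "compl v ?st ?s a b \<le> ?st a' b'"
    if "(a, b) \<in> MT \<union> RT" "b < b'" for a b a' b'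
  proof -
    have "X * (2 * real b) \<le> X * (2 * real b' - 2)"
      using that(2) \<open>X \<ge> 0\<close> by (intro mult_left_mono) auto
    then show ?thesis
      using compl_le[OF that(1)] slot_start_ge[OF \<open>X \<ge> 0\<close>, of R b' MT a'] by linarith
  qed
  have processor_ok: "compl v ?st ?s a b \<le> ?st a' b' \<or> compl v ?st ?s a' b' \<le> ?st a b"
    if "(a, b) \<in> MT \<union> RT" "(a', b') \<in> MT \<union> RT" "b \<noteq> b'" for a b a' b'
    using that earlier_job_first by (cases "b < b'") auto
  have map_before_reduce: "compl v ?st ?s a' b \<le> ?st a b"
    if "(a, b) \<in> RT" "(a', b) \<in> MT" for a a' b
  proof -
    have "(a, b) \<notin> MT" using that(1) inst unfolding mr_instance_def by blast
    then have "?st a b = ?st a' b + X"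
      using that(2) unfolding slot_start_def by (simp add: algebra_simps)
    moreover have "v a' b / \<sigma> \<le> X" using assms(4) that(2) by auto
    ultimately show ?thesis using slot_compl_le[of v a' b \<sigma> X MT R] by simp
  qed
  have after_release: "r b \<le> ?st a b" if "(a, b) \<in> MT \<union> RT" for a b
  proof -
    have "b \<in> {1..n}" using task_job_in_range[OF that] .
    then have "r b \<le> R" "X * (2 * real b - 2) \<ge> 0" using assms(1,2) by auto
    then show ?thesis using slot_start_ge[OF \<open>X \<ge> 0\<close>, of R b MT a] by linarith
  qed
  show ?thesis
    unfolding feasible_def
  proof (intro conjI)
    show "\<forall>(a, b)\<in>MT \<union> RT. \<forall>(a', b')\<in>MT \<union> RT. a = a' \<and> b \<noteq> b' \<longrightarrow>
        compl v ?st ?s a b \<le> ?st a' b' \<or> compl v ?st ?s a' b' \<le> ?st a b"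
      using processor_ok by blast
    show "\<forall>(a, b)\<in>RT. \<forall>(a', b')\<in>MT. b' = b \<longrightarrow> compl v ?st ?s a' b' \<le> ?st a b"
      using map_before_reduce by blast
    show "\<forall>(a, b)\<in>MT \<union> RT. r b \<le> ?st a b"
      using after_release by blast
  qed (use assms(3,5) in auto)
qed

lemma slot_schedule_objective_le:
  assumes "\<forall>k\<in>{1..n}. w k \<le> W" "R \<ge> 0" "X \<ge> 0"
    and "\<forall>(a, b)\<in>MT \<union> RT. v a b / \<sigma> \<le> X"
  shows "objective n w MT RT v (slot_start MT R X) (\<lambda>_ _. \<sigma>)
           \<le> W * (real n * R + real n * (real n + 1) * X)"
proof -
  have "w k * job_completion MT RT v (slot_start MT R X) (\<lambda>_ _. \<sigma>) k \<le> W * (R + X * (2 * real k))"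
    if k: "k \<in> {1..n}" for k
  proof -
    obtain a where "(a, k) \<in> MT" using job_has_map_task[OF k] by blast
    have "compl v (slot_start MT R X) (\<lambda>_ _. \<sigma>) a' k \<le> R + X * (2 * real k)"
      if "(a', k) \<in> MT \<union> RT" for a'
      using assms(4) that by (intro slot_compl_le_job_end[OF \<open>X \<ge> 0\<close>]) auto
    then have "job_completion MT RT v (slot_start MT R X) (\<lambda>_ _. \<sigma>) k \<le> R + X * (2 * real k)"
      using \<open>(a, k) \<in> MT\<close> finite_tasks by (intro job_completion_le) auto
    then have "w k * job_completion MT RT v (slot_start MT R X) (\<lambda>_ _. \<sigma>) k \<le> w k * (R + X * (2 * real k))"
      using weight_pos[OF k] by (intro mult_left_mono) auto
    also have "\<dots> \<le> W * (R + X * (2 * real k))"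
      using assms(1-3) k by (intro mult_right_mono) auto
    finally show ?thesis .
  qed
  then have "objective n w MT RT v (slot_start MT R X) (\<lambda>_ _. \<sigma>)
               \<le> (\<Sum>k\<in>{1..n}. W * (R + X * (2 * real k)))"
    unfolding objective_def by (rule sum_mono)
  also have "\<dots> = W * (real n * R + X * (\<Sum>k\<in>{1..n}. 2 * real k))"
    by (simp add: sum_distrib_left[symmetric] sum.distrib distrib_left)
  also have "\<dots> = W * (real n * R + real n * (real n + 1) * X)"
    by (simp only: sum_of_doubles_atLeastAtMost) (simp add: algebra_simps)
  finally show ?thesis .
qed

lemma task_duration_le_objective:
  assumes feasible: "feasible n m r MT RT v \<beta> E st s" and ij: "(i, j) \<in> MT \<union> RT"
  shows "w j * (v i j / s i j) \<le> objective n w MT RT v st s"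
proof -
  have speed_pos: "\<And>a b. (a, b) \<in> MT \<union> RT \<Longrightarrow> s a b > 0"
    and start_ge: "\<And>a b. (a, b) \<in> MT \<union> RT \<Longrightarrow> r b \<le> st a b"
    using feasible unfolding feasible_def by auto
  have duration_le: "v a k / s a k \<le> job_completion MT RT v st s k"
    if "(a, k) \<in> MT \<union> RT" for a k
  proof -
    have "0 \<le> st a k"
      using release_nonneg[OF task_job_in_range[OF that]] start_ge[OF that] by linarith
    then show ?thesis
      using compl_le_job_completion[OF finite_tasks that, where v=v and st=st and s=s]
      unfolding compl_def by linarith
  qed
  have "0 \<le> job_completion MT RT v st s k" if k: "k \<in> {1..n}" for k
  proof -
    obtain a where a: "(a, k) \<in> MT \<union> RT" using job_has_map_task[OF k] by blast
    have "0 \<le> v a k" using work_nonneg a by auto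
    then have "0 \<le> v a k / s a k" using speed_pos[OF a] by simp
    then show ?thesis using duration_le[OF a] by linarith
  qed
  then have "w j * job_completion MT RT v st s j \<le> objective n w MT RT v st s"
    unfolding objective_def using task_job_in_range[OF ij] weight_pos
    by (intro member_le_sum) (auto simp: less_imp_le)
  moreover have "w j * (v i j / s i j) \<le> w j * job_completion MT RT v st s j"
    using weight_pos[OF task_job_in_range[OF ij]]
    by (intro mult_left_mono[OF duration_le[OF ij]]) simp
  ultimately show ?thesis by linarith
qed

lemma optimal_objective_le_t_max:
  assumes "optimal n m w r MT RT v \<beta> E st s" and "(i, j) \<in> MT \<union> RT" "v i j > 0"
  shows "objective n w MT RT v st s \<le> Min (w ` {1..n}) * t_max n w r MT RT v \<beta> E"
proof -
  define T where "T = MT \<union> RT"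
  define wmin where "wmin = Min (w ` {1..n})"
  define wmax where "wmax = Max (w ` {1..n})"
  define rmax where "rmax = Max (r ` {1..n})"
  define vmax where "vmax = Max ((\<lambda>(a, b). v a b) ` T)"
  define X where "X = (real (card T) * vmax powr \<beta> / E) powr (1 / (\<beta> - 1))"
  have j: "j \<in> {1..n}" using task_job_in_range[OF assms(2)] .
  have vmax_ge: "\<forall>(a, b)\<in>T. v a b \<le> vmax"
    unfolding vmax_def T_def using finite_tasks by (auto intro!: Max_ge)
  have "wmin > 0" unfolding wmin_def using weight_pos j by (subst Min_gr_iff) auto
  have "v i j \<le> vmax" using vmax_ge assms(2) unfolding T_def by blast
  then have "vmax > 0" using assms(3) by linarith
  have "card T > 0" using finite_tasks assms(2) card_gt_0_iff unfolding T_def by blast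
  then have "X > 0" unfolding X_def using \<open>vmax > 0\<close> budget_pos by simp
  have "r j \<le> rmax" unfolding rmax_def using j by simp
  then have "rmax \<ge> 0" using release_nonneg[OF j] by linarith
  have durations: "\<forall>(a, b)\<in>T. v a b / (vmax / X) \<le> X"
    using vmax_ge \<open>vmax > 0\<close> \<open>X > 0\<close> by (auto simp: field_simps)
  have "energy \<beta> T v (\<lambda>_ _. vmax / X) \<le> real (card T) * vmax * (vmax / X) powr (\<beta> - 1)"
    using constant_speed_energy_le[OF vmax_ge] .
  also have "\<dots> = E"
    using budget_speed_energy_eq[OF _ \<open>vmax > 0\<close> budget_pos beta_gt_1 X_def] \<open>card T > 0\<close> by simp
  finally have "feasible n m r MT RT v \<beta> E (slot_start MT rmax X) (\<lambda>_ _. vmax / X)"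
    using durations \<open>X > 0\<close> \<open>vmax > 0\<close> unfolding T_def rmax_def
    by (intro slot_schedule_feasible) auto
  then have "objective n w MT RT v st s \<le> objective n w MT RT v (slot_start MT rmax X) (\<lambda>_ _. vmax / X)"
    using assms(1) unfolding optimal_def by blast
  also have "\<dots> \<le> wmax * (real n * rmax + real n * (real n + 1) * X)"
    using durations \<open>rmax \<ge> 0\<close> \<open>X > 0\<close> unfolding T_def wmax_def
    by (intro slot_schedule_objective_le) auto
  also have "\<dots> = wmin * t_max n w r MT RT v \<beta> E"
    unfolding t_max_def Let_def using \<open>wmin > 0\<close>
    by (simp add: wmin_def wmax_def rmax_def vmax_def X_def T_def)
  finally show ?thesis unfolding wmin_def .
qed

end

theorem proposition2:
  fixes n m :: nat and w r :: "nat \<Rightarrow> real" and MT RT :: "(nat \<times> nat) set"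
    and v st s :: "nat \<Rightarrow> nat \<Rightarrow> real" and \<beta> E :: real
  assumes "mr_instance n m w r MT RT v \<beta> E"
    and "optimal n m w r MT RT v \<beta> E st s"
    and "(i, j) \<in> MT \<union> RT" and "v i j > 0"
  shows "v i j / t_max n w r MT RT v \<beta> E \<le> s i j \<and>
         s i j \<le> (E / v i j) powr (1 / (\<beta> - 1))"
proof
  have feasible: "feasible n m r MT RT v \<beta> E st s"
    using assms(2) unfolding optimal_def by blast
  then have "s i j > 0" using assms(3) unfolding feasible_def by auto
  have j: "j \<in> {1..n}" using task_job_in_range[OF assms(1,3)] .
  have "Min (w ` {1..n}) * (v i j / s i j) \<le> w j * (v i j / s i j)"
    using j assms(4) \<open>s i j > 0\<close> by (intro mult_right_mono) auto
  also have "\<dots> \<le> objective n w MT RT v st s"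
    using task_duration_le_objective[OF assms(1) feasible assms(3)] .
  also have "\<dots> \<le> Min (w ` {1..n}) * t_max n w r MT RT v \<beta> E"
    using optimal_objective_le_t_max[OF assms] .
  finally have bound: "v i j / s i j \<le> t_max n w r MT RT v \<beta> E"
    using weight_pos[OF assms(1)] j by (subst (asm) mult_le_cancel_left_pos) (auto simp: Min_gr_iff)
  have "v i j / s i j > 0" using assms(4) \<open>s i j > 0\<close> by simp
  with bound have "t_max n w r MT RT v \<beta> E > 0" by linarith
  with bound show "v i j / t_max n w r MT RT v \<beta> E \<le> s i j"
    using \<open>s i j > 0\<close> by (simp add: field_simps)
  show "s i j \<le> (E / v i j) powr (1 / (\<beta> - 1))"
    using speed_le_energy_root[of "MT \<union> RT" i j v s \<beta> E] finite_tasks[OF assms(1)] assms(3,4)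
      work_nonneg[OF assms(1)] \<open>s i j > 0\<close> beta_gt_1[OF assms(1)] feasible
    unfolding feasible_def by blast
qed

end
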